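(* For $n\geq 5$, in the Waiter-Client game on $K_n$, Waiter can force Client to build a red Hamilton path within $n-1$ rounds such that one of its endpoints is incident with at most two blue edges.
   Context: Waiter-Client game on $K_n$: in each round Waiter offers two free edges of $K_n$, Client colors one of them red and the other becomes blue. *)

theory Defs
  imports Main
begin

definition Kn_edges :: "nat \<Rightarrow> nat set set" where
  "Kn_edges n = {e. \<exists>u v. u < n \<and> v < n \<and> u \<noteq> v \<and> e = {u, v}}"

definition ham_path_in :: "nat \<Rightarrow> nat set set \<Rightarrow> nat list \<Rightarrow> bool" where
  "ham_path_in n R vs \<longleftrightarrow> distinct vs \<and> set vs = {..<n} \<and>
     (\<forall>i. Suc i < length vs \<longrightarrow> {vs ! i, vs ! Suc i} \<in> R)"

definition deg_in :: "nat set set \<Rightarrow> nat \<Rightarrow> nat" where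
  "deg_in B v = card {e \<in> B. v \<in> e}"

definition goal :: "nat \<Rightarrow> nat set set \<Rightarrow> nat set set \<Rightarrow> bool" where
  "goal n R B \<longleftrightarrow> (\<exists>vs. ham_path_in n R vs \<and>
      (deg_in B (hd vs) \<le> 2 \<or> deg_in B (last vs) \<le> 2))"

text \<open>In each round Waiter offers two distinct free edges; Client colours one red, the other blue.\<close>
fun waiter_wins :: "nat \<Rightarrow> nat \<Rightarrow> nat set set \<Rightarrow> nat set set \<Rightarrow> bool" where
  "waiter_wins n 0 R B = goal n R B"
| "waiter_wins n (Suc k) R B = (goal n R B \<or>
     (\<exists>e1 e2. e1 \<in> Kn_edges n \<and> e2 \<in> Kn_edges n \<and> e1 \<noteq> e2 \<and>
        e1 \<notin> R \<union> B \<and> e2 \<notin> R \<union> B \<and>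
        waiter_wins n k (insert e1 R) (insert e2 B) \<and>
        waiter_wins n k (insert e2 R) (insert e1 B)))"

end

theory Submission
  imports Defs
begin

text \<open>After two rounds centred at vertex 1 the red edges form a path on three vertices, and both
  blue edges meet its middle vertex. From then on Waiter always picks a vertex x off the red path
  and offers the two edges joining x to the endpoints of the path. Whichever edge Client colours
  red extends the path by x, and the blue edge then lies inside the path. Hence every vertex off
  the path keeps blue degree at most 1, and the vertex added in the last round is an endpoint of
  the red Hamilton path with blue degree at most 2.\<close>

lemma Kn_edgesI: "u < n \<Longrightarrow> v < n \<Longrightarrow> u \<noteq> v \<Longrightarrow> {u, v} \<in> Kn_edges n"
  unfolding Kn_edges_def by blast

lemma waiter_wins_SucI:
  assumes "e1 \<in> Kn_edges n" "e2 \<in> Kn_edges n" "e1 \<noteq> e2" "e1 \<notin> R \<union> B" "e2 \<notin> R \<union> B"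
    and "waiter_wins n k (insert e1 R) (insert e2 B)"
    and "waiter_wins n k (insert e2 R) (insert e1 B)"
  shows "waiter_wins n (Suc k) R B"
  using assms by auto

lemma deg_in_insert_le: "deg_in (insert e B) v \<le> Suc (deg_in B v)"
proof -
  have "{f \<in> insert e B. v \<in> f} = (if v \<in> e then insert e {f \<in> B. v \<in> f} else {f \<in> B. v \<in> f})"
    by auto
  then show ?thesis unfolding deg_in_def by (simp add: card_insert_le_m1)
qed

lemma deg_in_insert_notin: "v \<notin> e \<Longrightarrow> deg_in (insert e B) v = deg_in B v"
  unfolding deg_in_def by (metis insert_iff)

lemma ham_path_in_iff:
  "ham_path_in n R vs \<longleftrightarrow>
     distinct vs \<and> set vs = {..<n} \<and> successively (\<lambda>u v. {u, v} \<in> R) vs"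
  unfolding ham_path_in_def successively_conv_nth ..

lemma set_eq_lessThan_if_distinct:
  assumes "distinct vs" "length vs = n" "set vs \<subseteq> {..<n}"
  shows "set vs = {..<n}"
  using assms by (simp add: card_subset_eq distinct_card)

lemma ex_less_notin_set:
  assumes "length vs < n"
  obtains x where "x < n" "x \<notin> set vs"
proof -
  have "card (set vs) < card {..<n}" using assms card_length[of vs] by simp
  then have "\<not> {..<n} \<subseteq> set vs" by (meson card_mono finite_set not_le)
  then show ?thesis using that by auto
qed

definition inner_vertices :: "'a list \<Rightarrow> 'a set" where
  "inner_vertices vs = set vs - {hd vs, last vs}"

lemma inner_vertices_rev [simp]: "inner_vertices (rev vs) = inner_vertices vs"
  by (cases "vs = []") (auto simp: inner_vertices_def hd_rev last_rev)

text \<open>The blue condition guarantees that every edge from an endpoint of the path to a vertex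
  off the path is still free.\<close>

definition red_path_position :: "nat \<Rightarrow> nat list \<Rightarrow> nat set set \<Rightarrow> nat set set \<Rightarrow> bool" where
  "red_path_position n vs R B \<longleftrightarrow>
     distinct vs \<and> 2 \<le> length vs \<and> set vs \<subseteq> {..<n} \<and>
     successively (\<lambda>u v. {u, v} \<in> R) vs \<and> (\<forall>e\<in>R. e \<subseteq> set vs) \<and>
     (\<forall>e\<in>B. e \<subseteq> set vs \<or> e \<inter> inner_vertices vs \<noteq> {}) \<and>
     (\<forall>v. v \<notin> set vs \<longrightarrow> deg_in B v \<le> 1)"

lemma red_path_position_rev [simp]:
  "red_path_position n (rev vs) R B \<longleftrightarrow> red_path_position n vs R B"
  by (simp add: red_path_position_def insert_commute)

lemma red_path_position_endpoints:
  assumes "red_path_position n vs R B"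
  shows "vs \<noteq> []" "hd vs \<in> set vs" "last vs \<in> set vs" "hd vs \<noteq> last vs"
proof -
  have "distinct vs" "2 \<le> length vs" using assms unfolding red_path_position_def by auto
  then show "vs \<noteq> []" "hd vs \<in> set vs" "last vs \<in> set vs" "hd vs \<noteq> last vs"
    by (cases vs; auto)+
qed

lemma red_path_position_endpoint_edge_free:
  assumes "red_path_position n vs R B" "x \<notin> set vs" "v \<in> {hd vs, last vs}"
  shows "{x, v} \<notin> R \<union> B"
  using assms unfolding red_path_position_def inner_vertices_def by auto

lemma red_path_position_Cons:
  assumes pos: "red_path_position n vs R B" and x: "x < n" "x \<notin> set vs"
  shows "red_path_position n (x # vs) (insert {x, hd vs} R) (insert {x, last vs} B)"
proof -
  note ends = red_path_position_endpoints[OF pos]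
  have "inner_vertices vs \<subseteq> inner_vertices (x # vs)"
    using x(2) ends unfolding inner_vertices_def by auto
  moreover have "\<forall>e\<in>B. e \<subseteq> set vs \<or> e \<inter> inner_vertices vs \<noteq> {}"
    using pos unfolding red_path_position_def by blast
  ultimately have "\<forall>e\<in>insert {x, last vs} B. e \<subseteq> set (x # vs) \<or> e \<inter> inner_vertices (x # vs) \<noteq> {}"
    using ends(3) by auto
  moreover have "deg_in (insert {x, last vs} B) v = deg_in B v" if "v \<notin> set (x # vs)" for v
    using that ends by (intro deg_in_insert_notin) auto
  moreover have "successively (\<lambda>u v. {u, v} \<in> R) vs
    \<Longrightarrow> successively (\<lambda>u v. {u, v} \<in> insert {x, hd vs} R) (x # vs)"
    using ends by (auto simp: successively_Cons elim: successively_mono)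
  ultimately show ?thesis
    using pos x ends unfolding red_path_position_def by (intro conjI; auto)
qed

lemma red_path_position_snoc:
  assumes pos: "red_path_position n vs R B" and x: "x < n" "x \<notin> set vs"
  shows "red_path_position n (vs @ [x]) (insert {x, last vs} R) (insert {x, hd vs} B)"
proof -
  have "red_path_position n (x # rev vs) (insert {x, last vs} R) (insert {x, hd vs} B)"
    using red_path_position_Cons[of n "rev vs" R B x] pos x red_path_position_endpoints(1)[OF pos]
    by (simp add: hd_rev last_rev)
  then show ?thesis
    by (metis red_path_position_rev rev.simps(2) rev_rev_ident)
qed

lemma goal_if_spanning_red_path:
  assumes "red_path_position n vs R B" "length vs = n"
    and "deg_in B (hd vs) \<le> 2 \<or> deg_in B (last vs) \<le> 2"
  shows "goal n R B"
proof -
  have "ham_path_in n R vs"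
    using assms(1,2) set_eq_lessThan_if_distinct[of vs n]
    unfolding ham_path_in_iff red_path_position_def by simp
  then show ?thesis using assms(3) unfolding goal_def by blast
qed

lemma waiter_extends_red_path:
  assumes pos: "red_path_position n vs R B" and x: "x < n" "x \<notin> set vs"
    and win: "\<And>vs' R' B'. red_path_position n vs' R' B' \<Longrightarrow> length vs' = Suc (length vs) \<Longrightarrow>
      x \<in> {hd vs', last vs'} \<Longrightarrow> deg_in B' x \<le> 2 \<Longrightarrow> waiter_wins n k R' B'"
  shows "waiter_wins n (Suc k) R B"
proof (rule waiter_wins_SucI)
  note ends = red_path_position_endpoints[OF pos]
  have "hd vs < n" "last vs < n"
    using pos ends(2,3) unfolding red_path_position_def by (meson lessThan_iff subsetD)+
  then show "{x, hd vs} \<in> Kn_edges n" "{x, last vs} \<in> Kn_edges n" "{x, hd vs} \<noteq> {x, last vs}"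
    using x ends by (auto intro!: Kn_edgesI simp: doubleton_eq_iff)
  show "{x, hd vs} \<notin> R \<union> B" "{x, last vs} \<notin> R \<union> B"
    using red_path_position_endpoint_edge_free[OF pos x(2)] by auto
  have deg: "deg_in (insert e B) x \<le> 2" for e
    using pos x(2) deg_in_insert_le[of e B x] unfolding red_path_position_def by fastforce
  show "waiter_wins n k (insert {x, hd vs} R) (insert {x, last vs} B)"
    using win[OF red_path_position_Cons[OF pos x]] deg by simp
  show "waiter_wins n k (insert {x, last vs} R) (insert {x, hd vs} B)"
    using win[OF red_path_position_snoc[OF pos x]] deg by simp
qed

lemma waiter_completes_red_path:
  assumes "red_path_position n vs R B" "length vs + Suc k = n"
  shows "waiter_wins n (Suc k) R B"
  using assms
proof (induction k arbitrary: vs R B)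
  case 0
  have "length vs < n" using "0.prems"(2) by simp
  then obtain x where x: "x < n" "x \<notin> set vs" by (rule ex_less_notin_set)
  show ?case
  proof (rule waiter_extends_red_path[OF "0.prems"(1) x])
    fix vs' R' B'
    assume "red_path_position n vs' R' B'" "length vs' = Suc (length vs)"
      and "x \<in> {hd vs', last vs'}" "deg_in B' x \<le> 2"
    then show "waiter_wins n 0 R' B'"
      using "0.prems"(2) goal_if_spanning_red_path[of n vs' R' B'] by auto
  qed
next
  case (Suc k)
  have "length vs < n" using Suc.prems(2) by simp
  then obtain x where x: "x < n" "x \<notin> set vs" by (rule ex_less_notin_set)
  show ?case
    by (rule waiter_extends_red_path[OF Suc.prems(1) x]) (use Suc in auto)
qed

lemma red_path_position_cherry:
  assumes "distinct [a, b, c]" "a < n" "b < n" "c < n"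
  shows "red_path_position n [a, b, c] {{b, c}, {b, a}} {{b, d}, {b, r}}"
proof -
  have "b \<in> inner_vertices [a, b, c]" using assms(1) by (simp add: inner_vertices_def)
  moreover have "deg_in {{b, d}, {b, r}} v \<le> 1" if "v \<notin> set [a, b, c]" for v
  proof -
    have "{e \<in> {{b, d}, {b, r}}. v \<in> e} \<subseteq> {{b, v}}" using that by auto
    then show ?thesis unfolding deg_in_def by (metis card_mono finite.intros is_singletonI
          is_singleton_altdef)
  qed
  ultimately show ?thesis
    using assms unfolding red_path_position_def by (auto simp: insert_commute)
qed

lemma waiter_wins_after_first_round:
  assumes n: "5 \<le> n" and ar: "a \<in> {0, 2}" "r \<in> {0, 2}"
  shows "waiter_wins n (Suc (Suc (n - 4))) {{1, a}} {{1, r}}"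
proof (rule waiter_wins_SucI)
  show "{1, 3} \<in> Kn_edges n" "{1, 4} \<in> Kn_edges n" using n by (auto intro: Kn_edgesI)
  show "{1::nat, 3} \<noteq> {1, 4}" "{1::nat, 3} \<notin> {{1, a}} \<union> {{1, r}}"
    "{1::nat, 4} \<notin> {{1, a}} \<union> {{1, r}}"
    using ar by (auto simp: doubleton_eq_iff)
  have "waiter_wins n (Suc (n - 4)) (insert {1, c} {{1, a}}) (insert {1, d} {{1, r}})"
    if "c \<in> {3, 4}" for c d :: nat
  proof (rule waiter_completes_red_path)
    show "red_path_position n [a, 1, c] (insert {1, c} {{1, a}}) (insert {1, d} {{1, r}})"
      using that n ar by (intro red_path_position_cherry) auto
    show "length [a, 1, c] + Suc (n - 4) = n" using n by simp
  qed
  then show "waiter_wins n (Suc (n - 4)) (insert {1, 3} {{1, a}}) (insert {1, 4} {{1, r}})"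
    "waiter_wins n (Suc (n - 4)) (insert {1, 4} {{1, a}}) (insert {1, 3} {{1, r}})"
    by simp_all
qed

theorem lemma3p1:
  fixes n :: nat
  assumes "n \<ge> 5"
  shows "waiter_wins n (n - 1) {} {}"
proof -
  have "waiter_wins n (Suc (Suc (Suc (n - 4)))) {} {}"
  proof (rule waiter_wins_SucI)
    show "{1, 0} \<in> Kn_edges n" "{1, 2} \<in> Kn_edges n" using assms by (auto intro: Kn_edgesI)
    show "{1::nat, 0} \<noteq> {1, 2}" by (simp add: doubleton_eq_iff)
    show "waiter_wins n (Suc (Suc (n - 4))) (insert {1, 0} {}) (insert {1, 2} {})"
      "waiter_wins n (Suc (Suc (n - 4))) (insert {1, 2} {}) (insert {1, 0} {})"
      by (rule waiter_wins_after_first_round; use assms in simp)+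
  qed simp_all
  moreover have "n - 1 = Suc (Suc (Suc (n - 4)))" using assms by simp
  ultimately show ?thesis by simp
qed

end
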